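(* Let $n\in\mathbb{N}$ and let $\psi$ be an increasing concave function on $[0,\infty)$ with $\psi(0)=0$. The following are equivalent: (i) $\Lambda_\psi\cap L_\infty\not\subset L_{n,1}$; (ii) $\liminf_{t\to\infty}\psi(t)/t^{1/n}=0$; (iii) $\liminf_{m\to\infty}\psi(2^{mn})/2^m=0$.
   Context: For a measurable function $f$ on $(0,\infty)$, $\mu(f)$ is the decreasing rearrangement of $|f|$. The Lorentz space $\Lambda_\psi$ is the set of measurable $f$ on $(0,\infty)$ with $\|f\|_{\Lambda_\psi}=\int_0^\infty\mu(t;f)\,d\psi(t)<\infty$; $L_{n,1}=\Lambda_\psi$ with $\psi(t)=t^{1/n}$. In (i) the inclusion is set inclusion. *)

theory Defs
  imports "HOL-Analysis.Analysis"
begin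

definition decr_rearr :: "(real \<Rightarrow> real) \<Rightarrow> real \<Rightarrow> ennreal" where
  "decr_rearr f t = Inf {s::ennreal.
      emeasure lborel {x \<in> {0<..}. s < ennreal \<bar>f x\<bar>} \<le> ennreal t}"

text \<open>Right-continuous distribution function of the Lebesgue--Stieltjes measure d psi on [0,\<infinity>):
  F(t) = psi(t+) for t \<ge> 0 and 0 for t < 0 (so a possible jump of psi at 0 gives an atom at 0).\<close>
definition stieltjes_dist :: "(real \<Rightarrow> real) \<Rightarrow> real \<Rightarrow> real" where
  "stieltjes_dist \<psi> t = (if t < 0 then 0 else Inf (\<psi> ` {t<..}))"

definition lorentz_norm :: "(real \<Rightarrow> real) \<Rightarrow> (real \<Rightarrow> real) \<Rightarrow> ennreal" where
  "lorentz_norm \<psi> f = (\<integral>\<^sup>+ t. decr_rearr f t * indicator {0..} t \<partial>interval_measure (stieltjes_dist \<psi>))"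

definition measurable_pos :: "(real \<Rightarrow> real) set" where
  "measurable_pos = borel_measurable (restrict_space lborel {0<..})"

definition Lorentz_space :: "(real \<Rightarrow> real) \<Rightarrow> (real \<Rightarrow> real) set" where
  "Lorentz_space \<psi> = {f \<in> measurable_pos. lorentz_norm \<psi> f < \<infinity>}"

definition Linfty_pos :: "(real \<Rightarrow> real) set" where
  "Linfty_pos = {f \<in> measurable_pos. \<exists>C. AE x in lborel. x > 0 \<longrightarrow> \<bar>f x\<bar> \<le> C}"

definition Lorentz_n1 :: "nat \<Rightarrow> (real \<Rightarrow> real) set" where
  "Lorentz_n1 n = Lorentz_space (\<lambda>t. t powr (1 / real n))"

end

theory Submission
  imports Defs
begin

text \<open>
  If \<psi>(t) \<ge> c t^(1/n) for large t, the two Lorentz norms can be compared level by level: by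
  the layer cake formula each of them integrates, over s \<ge> 0, the Stieltjes measure of the
  initial segment {\<mu>(f) > s}, and the growth bound controls the d(t^(1/n))-measure of an initial
  segment by a constant plus 1/c times its d\<psi>-measure; for bounded f only the levels below the
  bound contribute. If instead \<psi>(t_k) \<le> 4^-k t_k^(1/n) along t_k \<rightarrow> \<infinity>, the bounded
  nonincreasing step function \<Sum>_k 2^k t_k^(-1/n) 1_(0, t_k/2] has finite \<Lambda>_\<psi>-norm but
  infinite L_(n,1)-norm. Finally, \<psi>(t)/t^(1/n) and \<psi>(2^(mn))/2^m are bounded below together,
  because \<psi> is monotone and every t \<ge> 1 lies between two consecutive points 2^(mn).
\<close>

section \<open>The Lebesgue--Stieltjes measure of a monotone function\<close>

abbreviation stieltjes_measure :: "(real \<Rightarrow> real) \<Rightarrow> real measure" where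
  "stieltjes_measure \<psi> \<equiv> interval_measure (stieltjes_dist \<psi>)"

lemma bdd_below_image_greaterThan:
  fixes \<psi> :: "real \<Rightarrow> real"
  assumes "mono_on {0..} \<psi>" "0 \<le> t"
  shows "bdd_below (\<psi> ` {t<..})"
proof (rule bdd_belowI)
  fix y assume "y \<in> \<psi> ` {t<..}"
  with assms show "\<psi> t \<le> y" by (auto intro!: mono_onD[OF assms(1)])
qed

lemma stieltjes_dist_ge:
  fixes \<psi> :: "real \<Rightarrow> real"
  assumes "mono_on {0..} \<psi>" "0 \<le> t"
  shows "\<psi> t \<le> stieltjes_dist \<psi> t"
proof -
  have "\<psi> t \<le> Inf (\<psi> ` {t<..})"
    using assms by (intro cInf_greatest) (auto intro!: mono_onD[OF assms(1)])
  then show ?thesis using assms by (simp add: stieltjes_dist_def)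
qed

lemma stieltjes_dist_le:
  assumes "mono_on {0..} \<psi>" "0 \<le> t" "t < u"
  shows "stieltjes_dist \<psi> t \<le> \<psi> u"
  using assms cInf_lower[OF _ bdd_below_image_greaterThan[OF assms(1,2)], of "\<psi> u"]
  by (simp add: stieltjes_dist_def)

lemma stieltjes_dist_eq_right_continuous:
  assumes "mono_on {0..} \<psi>" "0 \<le> t" "continuous (at_right t) \<psi>"
  shows "stieltjes_dist \<psi> t = \<psi> t"
proof (rule antisym)
  have "\<forall>\<^sub>F u in at_right t. stieltjes_dist \<psi> t \<le> \<psi> u"
    using eventually_at_right_less by eventually_elim (use assms in \<open>auto intro: stieltjes_dist_le\<close>)
  then show "stieltjes_dist \<psi> t \<le> \<psi> t"
    using assms(3) by (intro tendsto_lowerbound[where F = "at_right t"]) (auto simp: continuous_within)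
qed (rule stieltjes_dist_ge[OF assms(1,2)])

lemma mono_on_powr: "0 < p \<Longrightarrow> mono_on {0..} (\<lambda>t::real. t powr p)"
  by (auto intro!: mono_onI powr_mono2)

lemma stieltjes_dist_powr:
  assumes "0 < p" "0 \<le> t"
  shows "stieltjes_dist (\<lambda>x. x powr p) t = t powr p"
proof (rule stieltjes_dist_eq_right_continuous)
  show "mono_on {0..} (\<lambda>x::real. x powr p)"
    by (rule mono_on_powr[OF assms(1)])
  have "continuous_on {0..} (\<lambda>x::real. x powr p)"
    using assms by (intro continuous_on_powr' continuous_intros) auto
  then show "continuous (at_right t) (\<lambda>x. x powr p)"
    using assms by (auto simp: continuous_on_eq_continuous_within intro: continuous_within_subset)
qed (use assms in auto)

lemma mono_stieltjes_dist:
  assumes "mono_on {0..} \<psi>" "0 \<le> \<psi> 0"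
  shows "mono (stieltjes_dist \<psi>)"
proof (rule monoI)
  fix x y :: real assume "x \<le> y"
  show "stieltjes_dist \<psi> x \<le> stieltjes_dist \<psi> y"
  proof (cases "x < 0")
    case True
    then show ?thesis
      using stieltjes_dist_ge[OF assms(1), of y] assms mono_onD[OF assms(1), of 0 y]
      by (auto simp: stieltjes_dist_def)
  next
    case False
    with \<open>x \<le> y\<close> have "Inf (\<psi> ` {x<..}) \<le> Inf (\<psi> ` {y<..})"
      by (intro cInf_superset_mono bdd_below_image_greaterThan[OF assms(1)]) auto
    then show ?thesis using False \<open>x \<le> y\<close> by (simp add: stieltjes_dist_def)
  qed
qed

lemma stieltjes_dist_continuous_at_right:
  assumes "mono_on {0..} \<psi>" "0 \<le> \<psi> 0"
  shows "continuous (at_right a) (stieltjes_dist \<psi>)"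
proof (cases "a < 0")
  case True
  have "\<forall>\<^sub>F x in at_right a. stieltjes_dist \<psi> x = stieltjes_dist \<psi> a"
    unfolding eventually_at_right_field
    by (rule exI[of _ 0]) (use True in \<open>auto simp: stieltjes_dist_def\<close>)
  then show ?thesis unfolding continuous_within by (rule tendsto_eventually)
next
  case False
  let ?F = "stieltjes_dist \<psi>"
  show ?thesis unfolding continuous_within
  proof (rule order_tendstoI)
    fix y assume "y < ?F a"
    have "\<forall>\<^sub>F x in at_right a. ?F a \<le> ?F x"
      using eventually_at_right_less
      by eventually_elim (simp add: monoD[OF mono_stieltjes_dist[OF assms]])
    then show "\<forall>\<^sub>F x in at_right a. y < ?F x"
      by eventually_elim (use \<open>y < ?F a\<close> in auto)
  next
    fix y assume "?F a < y"
    then have "Inf (\<psi> ` {a<..}) < y" using False by (simp add: stieltjes_dist_def)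
    then obtain u where u: "a < u" "\<psi> u < y"
      using bdd_below_image_greaterThan[OF assms(1), of a] False
      by (subst (asm) cInf_less_iff) auto
    have "?F x < y" if "a < x" "x < u" for x
      using stieltjes_dist_le[OF assms(1), of x u] False u that by linarith
    then show "\<forall>\<^sub>F x in at_right a. ?F x < y"
      unfolding eventually_at_right_field using u(1) by blast
  qed
qed

lemma emeasure_stieltjes_measure_Ioc:
  assumes "mono_on {0..} \<psi>" "0 \<le> \<psi> 0" "a \<le> b"
  shows "emeasure (stieltjes_measure \<psi>) {a<..b} = ennreal (stieltjes_dist \<psi> b - stieltjes_dist \<psi> a)"
  using emeasure_interval_measure_Ioc[OF assms(3)] mono_stieltjes_dist[OF assms(1,2)]
    stieltjes_dist_continuous_at_right[OF assms(1,2)]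
  by (simp add: monoD)

lemma sigma_finite_stieltjes_measure:
  assumes "mono_on {0..} \<psi>" "0 \<le> \<psi> 0"
  shows "sigma_finite_measure (stieltjes_measure \<psi>)"
  using mono_stieltjes_dist[OF assms] stieltjes_dist_continuous_at_right[OF assms]
  by (intro sigma_finite_interval_measure) (auto simp: monoD)

lemma emeasure_stieltjes_measure_singleton_finite:
  assumes "mono_on {0..} \<psi>" "0 \<le> \<psi> 0"
  shows "emeasure (stieltjes_measure \<psi>) {x} < \<infinity>"
proof -
  have "emeasure (stieltjes_measure \<psi>) {x} \<le> emeasure (stieltjes_measure \<psi>) {x - 1<..x}"
    by (intro emeasure_mono) auto
  also have "\<dots> < \<infinity>"
    using emeasure_stieltjes_measure_Ioc[OF assms, of "x - 1" x] by simp
  finally show ?thesis .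
qed

section \<open>Decreasing rearrangement and Lorentz norms\<close>

lemma antimono_decr_rearr: "antimono (decr_rearr f)"
  unfolding decr_rearr_def
  by (intro antimonoI Inf_superset_mono) (auto intro: order_trans ennreal_leI)

lemma borel_measurable_antimono_ennreal:
  fixes g :: "real \<Rightarrow> ennreal"
  assumes "antimono g"
  shows "g \<in> borel_measurable borel"
proof (rule borel_measurableI_greater)
  fix y
  have "is_interval {x. y < g x}"
    unfolding is_interval_1 using antimonoD[OF assms] by (fastforce intro: less_le_trans)
  then show "{x \<in> space borel. y < g x} \<in> sets borel"
    using real_interval_borel_measurable by simp
qed

lemma borel_measurable_decr_rearr: "decr_rearr f \<in> borel_measurable borel"
  by (rule borel_measurable_antimono_ennreal[OF antimono_decr_rearr])

lemma decr_rearr_le_ess_bound: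
  assumes "AE x in lborel. 0 < x \<longrightarrow> \<bar>f x\<bar> \<le> C"
  shows "decr_rearr f t \<le> ennreal C"
  unfolding decr_rearr_def
proof (rule Inf_lower, safe)
  obtain N where N: "{x. \<not> (0 < x \<longrightarrow> \<bar>f x\<bar> \<le> C)} \<subseteq> N" "N \<in> null_sets lborel"
    using assms unfolding eventually_ae_filter by auto
  have "{x \<in> {0<..}. ennreal C < ennreal \<bar>f x\<bar>} \<subseteq> N"
    using N(1) by (auto simp: ennreal_less_iff)
  then have "emeasure lborel {x \<in> {0<..}. ennreal C < ennreal \<bar>f x\<bar>} \<le> emeasure lborel N"
    using N(2) by (intro emeasure_mono) auto
  also have "\<dots> = 0"
    using N(2) by (rule null_setsD1)
  finally show "emeasure lborel {x \<in> {0<..}. ennreal C < ennreal \<bar>f x\<bar>} \<le> ennreal t"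
    by simp
qed

lemma decr_rearr_le_abs:
  assumes "antimono_on {0<..} (\<lambda>x. \<bar>g x\<bar>)" "0 < t"
  shows "decr_rearr g t \<le> ennreal \<bar>g t\<bar>"
  unfolding decr_rearr_def
proof (rule Inf_lower, safe)
  have "x < t" if "0 < x" "\<bar>g t\<bar> < \<bar>g x\<bar>" for x
    using monotone_onD[OF assms(1), of t x] assms(2) that by (cases "t \<le> x") auto
  then have "{x \<in> {0<..}. ennreal \<bar>g t\<bar> < ennreal \<bar>g x\<bar>} \<subseteq> {0<..<t}"
    by (auto simp: ennreal_less_iff)
  then have "emeasure lborel {x \<in> {0<..}. ennreal \<bar>g t\<bar> < ennreal \<bar>g x\<bar>} \<le> emeasure lborel {0<..<t}"
    by (intro emeasure_mono) auto
  then show "emeasure lborel {x \<in> {0<..}. ennreal \<bar>g t\<bar> < ennreal \<bar>g x\<bar>} \<le> ennreal t"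
    using assms(2) by simp
qed

lemma abs_le_decr_rearr:
  assumes "g \<in> borel_measurable borel" "antimono_on {0<..} (\<lambda>x. \<bar>g x\<bar>)" "0 \<le> x" "x < t"
  shows "ennreal \<bar>g t\<bar> \<le> decr_rearr g x"
  unfolding decr_rearr_def
proof (rule Inf_greatest, safe)
  fix s assume s: "emeasure lborel {y \<in> {0<..}. s < ennreal \<bar>g y\<bar>} \<le> ennreal x"
  show "ennreal \<bar>g t\<bar> \<le> s"
  proof (rule ccontr)
    assume "\<not> ennreal \<bar>g t\<bar> \<le> s"
    moreover have "ennreal \<bar>g t\<bar> \<le> ennreal \<bar>g y\<bar>" if "0 < y" "y \<le> t" for y
      using monotone_onD[OF assms(2), of y t] that by (simp add: ennreal_leI)
    ultimately have "{0<..t} \<subseteq> {y \<in> {0<..}. s < ennreal \<bar>g y\<bar>}"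
      by (auto simp: not_le intro: less_le_trans)
    then have "emeasure lborel {0<..t} \<le> emeasure lborel {y \<in> {0<..}. s < ennreal \<bar>g y\<bar>}"
      using assms(1) by (intro emeasure_mono) measurable
    moreover have "emeasure lborel {0<..t} = ennreal t"
      using assms(3,4) by simp
    ultimately have "ennreal t \<le> ennreal x"
      using s by (metis order_trans)
    then show False using assms(3,4) by (simp add: ennreal_le_iff)
  qed
qed

lemma lorentz_norm_le_nn_integral:
  assumes "g \<in> borel_measurable borel" "antimono_on {0<..} (\<lambda>x. \<bar>g x\<bar>)" "\<And>x. 0 < x \<Longrightarrow> \<bar>g x\<bar> \<le> C"
  shows "lorentz_norm \<psi> g \<le> ennreal C * emeasure (stieltjes_measure \<psi>) {0}
      + (\<integral>\<^sup>+x. ennreal \<bar>g x\<bar> * indicator {0<..} x \<partial>stieltjes_measure \<psi>)"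
proof -
  have "decr_rearr g x * indicator {0..} x \<le> ennreal C * indicator {0} x + ennreal \<bar>g x\<bar> * indicator {0<..} x" for x
  proof (cases "0 < x")
    case True
    then show ?thesis using decr_rearr_le_abs[OF assms(2) True] by (simp split: split_indicator)
  next
    case False
    have "decr_rearr g x \<le> ennreal C" by (rule decr_rearr_le_ess_bound) (use assms(3) in auto)
    then show ?thesis using False by (auto split: split_indicator)
  qed
  then have "lorentz_norm \<psi> g
      \<le> (\<integral>\<^sup>+x. ennreal C * indicator {0} x + ennreal \<bar>g x\<bar> * indicator {0<..} x \<partial>stieltjes_measure \<psi>)"
    unfolding lorentz_norm_def by (intro nn_integral_mono)
  also have "\<dots> = ennreal C * emeasure (stieltjes_measure \<psi>) {0}
      + (\<integral>\<^sup>+x. ennreal \<bar>g x\<bar> * indicator {0<..} x \<partial>stieltjes_measure \<psi>)"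
    using assms(1) by (subst nn_integral_add) (auto simp: nn_integral_cmult_indicator)
  finally show ?thesis .
qed

lemma lorentz_norm_ge_Ioc:
  assumes "g \<in> borel_measurable borel" "antimono_on {0<..} (\<lambda>x. \<bar>g x\<bar>)" "0 \<le> a" "b < t"
  shows "ennreal \<bar>g t\<bar> * emeasure (stieltjes_measure \<psi>) {a<..b} \<le> lorentz_norm \<psi> g"
proof -
  have "ennreal \<bar>g t\<bar> * indicator {a<..b} x \<le> decr_rearr g x * indicator {0..} x" for x
    using abs_le_decr_rearr[OF assms(1,2), of x t] assms(3,4) by (simp split: split_indicator)
  then have "(\<integral>\<^sup>+x. ennreal \<bar>g t\<bar> * indicator {a<..b} x \<partial>stieltjes_measure \<psi>) \<le> lorentz_norm \<psi> g"
    unfolding lorentz_norm_def by (intro nn_integral_mono)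
  then show ?thesis by (simp add: nn_integral_cmult_indicator)
qed

lemma emeasure_lborel_atLeast: "emeasure lborel {a::real..} = \<infinity>"
proof (rule ccontr)
  assume "emeasure lborel {a..} \<noteq> \<infinity>"
  then obtain r where r: "emeasure lborel {a..} = ennreal r" "0 \<le> r"
    by (cases "emeasure lborel {a..}") auto
  have "emeasure lborel {a..a + r + 1} \<le> emeasure lborel {a..}"
    by (intro emeasure_mono) auto
  then show False using r by (simp add: ennreal_le_iff)
qed

lemma nn_integral_layer_cake:
  assumes "sigma_finite_measure M" and h[measurable]: "h \<in> borel_measurable M"
  shows "(\<integral>\<^sup>+t. h t \<partial>M)
    = (\<integral>\<^sup>+s. emeasure M {t \<in> space M. ennreal s < h t} * indicator {0..} s \<partial>lborel)"
proof -
  interpret pair_sigma_finite M lborel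
    using assms(1) by (simp add: pair_sigma_finite_def lborel.sigma_finite_measure_axioms)
  let ?G = "\<lambda>t s. indicator {s. ennreal s < h t} s * indicator {0..} s :: ennreal"
  have h_eq: "h t = (\<integral>\<^sup>+s. ?G t s \<partial>lborel)" for t
  proof -
    have "(\<integral>\<^sup>+s. ?G t s \<partial>lborel) = (\<integral>\<^sup>+s. indicator ({s. ennreal s < h t} \<inter> {0..}) s \<partial>lborel)"
      by (intro nn_integral_cong) (auto split: split_indicator)
    also have "\<dots> = h t"
    proof (cases "h t")
      case (real r)
      then have "{s. ennreal s < h t} \<inter> {0..} = {0..<r}"
        by (auto simp: ennreal_less_iff)
      then show ?thesis using real by simp
    next
      case top
      then show ?thesis by (simp add: emeasure_lborel_atLeast)
    qed
    finally show ?thesis by simp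
  qed
  have "(\<integral>\<^sup>+t. h t \<partial>M) = (\<integral>\<^sup>+t. (\<integral>\<^sup>+s. ?G t s \<partial>lborel) \<partial>M)"
    by (subst h_eq) simp
  also have "\<dots> = (\<integral>\<^sup>+s. (\<integral>\<^sup>+t. ?G t s \<partial>M) \<partial>lborel)"
    by (rule Fubini'[symmetric]) measurable
  also have "\<dots> = (\<integral>\<^sup>+s. emeasure M {t \<in> space M. ennreal s < h t} * indicator {0..} s \<partial>lborel)"
  proof (rule nn_integral_cong)
    fix s
    have "(\<integral>\<^sup>+t. ?G t s \<partial>M) = (\<integral>\<^sup>+t. indicator {t \<in> space M. ennreal s < h t} t * indicator {0..} s \<partial>M)"
      by (intro nn_integral_cong) (auto split: split_indicator)
    then show "(\<integral>\<^sup>+t. ?G t s \<partial>M) = emeasure M {t \<in> space M. ennreal s < h t} * indicator {0..} s"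
      by (simp add: nn_integral_multc)
  qed
  finally show ?thesis .
qed

lemma lorentz_norm_layer_cake:
  assumes "mono_on {0..} \<psi>" "0 \<le> \<psi> 0"
  shows "lorentz_norm \<psi> f = (\<integral>\<^sup>+s. emeasure (stieltjes_measure \<psi>)
      {t. ennreal s < decr_rearr f t * indicator {0..} t} * indicator {0..} s \<partial>lborel)"
  unfolding lorentz_norm_def
  using borel_measurable_decr_rearr[of f]
  by (subst nn_integral_layer_cake[OF sigma_finite_stieltjes_measure[OF assms]]) simp_all

section \<open>Growth of \<psi> gives the inclusion\<close>

lemma powr_le_of_emeasure_Ioc_le:
  fixes \<psi> :: "real \<Rightarrow> real"
  assumes mono: "mono_on {0..} \<psi>" "0 \<le> \<psi> 0" and "0 \<le> p" "0 < c"
    and growth: "\<And>t. T \<le> t \<Longrightarrow> c * t powr p \<le> \<psi> t"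
    and "0 \<le> t" "0 \<le> V" and mass: "emeasure (stieltjes_measure \<psi>) {0<..t} \<le> ennreal V"
  shows "t powr p \<le> T powr p + (\<psi> 1 + V) / c"
proof -
  let ?F = "stieltjes_dist \<psi>"
  have "?F t - ?F 0 \<le> V"
    using mass emeasure_stieltjes_measure_Ioc[OF mono \<open>0 \<le> t\<close>] \<open>0 \<le> V\<close> by simp
  moreover have "\<psi> t \<le> ?F t" "?F 0 \<le> \<psi> 1"
    using \<open>0 \<le> t\<close> by (auto intro: stieltjes_dist_ge stieltjes_dist_le mono)
  ultimately have "\<psi> t \<le> \<psi> 1 + V" by simp
  show ?thesis
  proof (cases "T \<le> t")
    case True
    then have "c * t powr p \<le> \<psi> 1 + V" using growth[OF True] \<open>\<psi> t \<le> \<psi> 1 + V\<close> by simp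
    then have "t powr p \<le> (\<psi> 1 + V) / c" using \<open>0 < c\<close> by (simp add: field_simps)
    then show ?thesis using powr_ge_zero[of T p] by linarith
  next
    case False
    then have "t powr p \<le> T powr p" using \<open>0 \<le> t\<close> \<open>0 \<le> p\<close> by (intro powr_mono2) auto
    moreover have "0 \<le> \<psi> 1" using mono_onD[OF mono(1), of 0 1] mono(2) by simp
    then have "0 \<le> (\<psi> 1 + V) / c" using \<open>0 \<le> V\<close> \<open>0 < c\<close> by simp
    ultimately show ?thesis by linarith
  qed
qed

lemma emeasure_powr_le_initial_segment:
  fixes \<psi> :: "real \<Rightarrow> real"
  assumes mono: "mono_on {0..} \<psi>" "0 \<le> \<psi> 0" and "0 < p" "0 < c"
    and growth: "\<And>t. T \<le> t \<Longrightarrow> c * t powr p \<le> \<psi> t"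
    and A: "A \<in> sets borel" "A \<subseteq> {0..}" "\<And>t u. t \<in> A \<Longrightarrow> 0 \<le> u \<Longrightarrow> u \<le> t \<Longrightarrow> u \<in> A"
  shows "emeasure (stieltjes_measure (\<lambda>t. t powr p)) A
     \<le> ennreal (T powr p + \<psi> 1 / c) + ennreal (1 / c) * emeasure (stieltjes_measure \<psi>) A"
proof (cases "emeasure (stieltjes_measure \<psi>) A")
  case top
  then show ?thesis using \<open>0 < c\<close> by (simp add: ennreal_mult_top)
next
  case (real V)
  define B where "B = T powr p + (\<psi> 1 + V) / c"
  have "0 \<le> \<psi> 1" using mono_onD[OF mono(1), of 0 1] mono(2) by simp
  have "A \<subseteq> {-1<..B powr (1 / p)}"
  proof
    fix t assume t: "t \<in> A"
    have "0 \<le> t" using A(2) t by auto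
    have "{0<..t} \<subseteq> A" using A(3)[OF t] by auto
    then have "emeasure (stieltjes_measure \<psi>) {0<..t} \<le> ennreal V"
      using A(1) real by (metis emeasure_mono sets_interval_measure)
    then have "t powr p \<le> B" unfolding B_def
      using \<open>0 < p\<close> \<open>0 \<le> t\<close> real(1)
      by (intro powr_le_of_emeasure_Ioc_le[OF mono _ \<open>0 < c\<close> growth]) auto
    have "t = (t powr p) powr (1 / p)" using \<open>0 \<le> t\<close> \<open>0 < p\<close> by (simp add: powr_powr)
    also have "\<dots> \<le> B powr (1 / p)" using \<open>t powr p \<le> B\<close> \<open>0 < p\<close> by (intro powr_mono2) auto
    finally show "t \<in> {-1<..B powr (1 / p)}" using \<open>0 \<le> t\<close> by simp
  qed
  then have "emeasure (stieltjes_measure (\<lambda>t. t powr p)) A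
      \<le> emeasure (stieltjes_measure (\<lambda>t. t powr p)) {-1<..B powr (1 / p)}"
    by (intro emeasure_mono) auto
  also have "\<dots> = ennreal B"
  proof -
    have "0 \<le> B" using \<open>0 \<le> \<psi> 1\<close> real \<open>0 < c\<close> unfolding B_def by simp
    then have "stieltjes_dist (\<lambda>t. t powr p) (B powr (1 / p)) = B"
      using \<open>0 < p\<close> by (simp add: stieltjes_dist_powr powr_powr)
    moreover have "stieltjes_dist (\<lambda>t. t powr p) (-1) = 0" by (simp add: stieltjes_dist_def)
    ultimately show ?thesis
      using emeasure_stieltjes_measure_Ioc[OF mono_on_powr[OF \<open>0 < p\<close>], of "-1" "B powr (1 / p)"]
        powr_ge_zero[of B "1 / p"]
      by simp
  qed
  also have "B = (T powr p + \<psi> 1 / c) + (1 / c) * V"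
    unfolding B_def by (simp add: add_divide_distrib)
  also have "ennreal \<dots> = ennreal (T powr p + \<psi> 1 / c) + ennreal (1 / c) * ennreal V"
    using \<open>0 \<le> \<psi> 1\<close> real \<open>0 < c\<close> by (simp add: ennreal_plus ennreal_mult[symmetric])
  finally show ?thesis using real by simp
qed

lemma lorentz_norm_powr_finite:
  fixes \<psi> :: "real \<Rightarrow> real"
  assumes mono: "mono_on {0..} \<psi>" "0 \<le> \<psi> 0" and "0 < p" "0 < c"
    and growth: "\<And>t. T \<le> t \<Longrightarrow> c * t powr p \<le> \<psi> t"
    and norm_finite: "lorentz_norm \<psi> f < \<infinity>"
    and bounded: "AE x in lborel. 0 < x \<longrightarrow> \<bar>f x\<bar> \<le> C"
  shows "lorentz_norm (\<lambda>t. t powr p) f < \<infinity>"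
proof -
  let ?A = "\<lambda>s. {t. ennreal s < decr_rearr f t * indicator {0..} t}"
  let ?\<mu> = "\<lambda>\<phi> s. emeasure (stieltjes_measure \<phi>) (?A s) * indicator {0..} s"
  define K where "K = T powr p + \<psi> 1 / c"
  have A_borel: "?A s \<in> sets borel" for s
    using borel_measurable_decr_rearr[of f] by measurable
  have "?\<mu> (\<lambda>t. t powr p) s \<le> ennreal K * indicator {0..<C} s + ennreal (1 / c) * ?\<mu> \<psi> s" for s
  proof (cases "s < C")
    case True
    have "emeasure (stieltjes_measure (\<lambda>t. t powr p)) (?A s)
        \<le> ennreal K + ennreal (1 / c) * emeasure (stieltjes_measure \<psi>) (?A s)"
      unfolding K_def
    proof (rule emeasure_powr_le_initial_segment[OF mono \<open>0 < p\<close> \<open>0 < c\<close> growth A_borel])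
      show "?A s \<subseteq> {0..}" by (auto split: split_indicator_asm)
      show "u \<in> ?A s" if "t \<in> ?A s" "0 \<le> u" "u \<le> t" for t u
        using that antimonoD[OF antimono_decr_rearr, of u t f]
        by (auto split: split_indicator_asm intro: less_le_trans)
    qed
    then show ?thesis using True by (auto split: split_indicator)
  next
    case False
    then have "ennreal C \<le> ennreal s" by (simp add: ennreal_leI)
    then have "decr_rearr f t \<le> ennreal s" for t
      using decr_rearr_le_ess_bound[OF bounded, of t] by (rule order_trans[rotated])
    then have "?A s = {}" by (auto simp: not_less split: split_indicator)
    then show ?thesis by simp
  qed
  then have "lorentz_norm (\<lambda>t. t powr p) f
      \<le> (\<integral>\<^sup>+s. ennreal K * indicator {0..<C} s + ennreal (1 / c) * ?\<mu> \<psi> s \<partial>lborel)"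
    unfolding lorentz_norm_layer_cake[OF mono_on_powr[OF \<open>0 < p\<close>] powr_ge_zero] by (intro nn_integral_mono) simp
  also have "\<dots> = ennreal K * emeasure lborel {0..<C} + ennreal (1 / c) * lorentz_norm \<psi> f"
  proof -
    have "antimono (\<lambda>s. emeasure (stieltjes_measure \<psi>) (?A s))"
      by (intro antimonoI emeasure_mono) (auto intro: le_less_trans ennreal_leI simp: A_borel)
    then have [measurable]: "(\<lambda>s. emeasure (stieltjes_measure \<psi>) (?A s)) \<in> borel_measurable borel"
      by (rule borel_measurable_antimono_ennreal)
    show ?thesis unfolding lorentz_norm_layer_cake[OF mono]
      by (subst nn_integral_add) (auto simp: nn_integral_cmult_indicator nn_integral_cmult)
  qed
  also have "\<dots> < \<infinity>" using norm_finite by (cases "0 \<le> C") (simp_all add: ennreal_mult_less_top)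
  finally show ?thesis .
qed

section \<open>Step functions separating the spaces\<close>

definition step_sum :: "(nat \<Rightarrow> real) \<Rightarrow> (nat \<Rightarrow> real) \<Rightarrow> real \<Rightarrow> real" where
  "step_sum a b x = (\<Sum>k. a k * indicator {0<..b k} x)"

context
  fixes a b :: "nat \<Rightarrow> real"
  assumes nonneg: "\<And>k. 0 \<le> a k" and summable_a: "summable a"
begin

lemma summable_step_sum_terms: "summable (\<lambda>k. a k * indicator {0<..b k} x)"
  using nonneg by (intro summable_comparison_test'[OF summable_a]) (auto split: split_indicator)

lemma borel_measurable_step_sum: "step_sum a b \<in> borel_measurable borel"
  unfolding step_sum_def by measurable

lemma step_sum_nonneg: "0 \<le> step_sum a b x"
  unfolding step_sum_def using nonneg by (intro suminf_nonneg summable_step_sum_terms) auto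

lemma step_sum_le_suminf: "step_sum a b x \<le> suminf a"
  unfolding step_sum_def using nonneg
  by (intro suminf_le summable_step_sum_terms summable_a) (auto split: split_indicator)

lemma antimono_on_step_sum: "antimono_on {0<..} (step_sum a b)"
  unfolding step_sum_def using nonneg
  by (intro monotone_onI suminf_le summable_step_sum_terms) (auto split: split_indicator)

lemma coeff_le_step_sum:
  assumes "0 < b k"
  shows "a k \<le> step_sum a b (b k)"
  unfolding step_sum_def
  using sum_le_suminf[OF summable_step_sum_terms, of "{k}" "b k"] nonneg assms by simp

lemma abs_step_sum [simp]: "\<bar>step_sum a b x\<bar> = step_sum a b x"
  using step_sum_nonneg by simp

lemma step_sum_Linfty_pos: "step_sum a b \<in> Linfty_pos"
  unfolding Linfty_pos_def measurable_pos_def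
  using step_sum_le_suminf
  by (auto intro!: measurable_restrict_space1 borel_measurable_step_sum exI[of _ "suminf a"])

lemma nn_integral_step_sum:
  assumes "sets M = sets borel"
  shows "(\<integral>\<^sup>+x. ennreal (step_sum a b x) \<partial>M) = (\<Sum>k. ennreal (a k) * emeasure M {0<..b k})"
proof -
  have "ennreal (step_sum a b x) = (\<Sum>k. ennreal (a k) * indicator {0<..b k} x)" for x
  proof -
    have "ennreal (step_sum a b x) = (\<Sum>k. ennreal (a k * indicator {0<..b k} x))"
      unfolding step_sum_def using nonneg
      by (intro suminf_ennreal2[symmetric] summable_step_sum_terms) auto
    also have "\<dots> = (\<Sum>k. ennreal (a k) * indicator {0<..b k} x)"
      by (intro suminf_cong) (auto split: split_indicator)
    finally show ?thesis .
  qed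
  then have "(\<integral>\<^sup>+x. ennreal (step_sum a b x) \<partial>M) = (\<integral>\<^sup>+x. (\<Sum>k. ennreal (a k) * indicator {0<..b k} x) \<partial>M)"
    by simp
  also have "\<dots> = (\<Sum>k. ennreal (a k) * emeasure M {0<..b k})"
    using assms by (simp add: nn_integral_suminf nn_integral_cmult_indicator)
  finally show ?thesis .
qed

end

lemma lorentz_norm_step_sum_finite:
  fixes \<psi> :: "real \<Rightarrow> real"
  assumes mono: "mono_on {0..} \<psi>" "0 \<le> \<psi> 0"
    and a: "\<And>k. 0 \<le> a k" "summable a"
    and b: "\<And>k. 0 \<le> b k" "\<And>k. b k < s k"
    and summable_mass: "summable (\<lambda>k. a k * \<psi> (s k))"
  shows "lorentz_norm \<psi> (step_sum a b) < \<infinity>"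
proof -
  let ?F = "stieltjes_dist \<psi>"
  have "ennreal (a k) * emeasure (stieltjes_measure \<psi>) {0<..b k} \<le> ennreal (a k * \<psi> (s k))" for k
  proof -
    have "?F (b k) - ?F 0 \<le> \<psi> (s k)"
      using stieltjes_dist_le[OF mono(1) b(1)[of k] b(2)[of k]] stieltjes_dist_ge[OF mono(1), of 0] mono(2)
      by linarith
    then have "ennreal (a k * (?F (b k) - ?F 0)) \<le> ennreal (a k * \<psi> (s k))"
      by (intro ennreal_leI mult_left_mono a(1))
    then show ?thesis
      using emeasure_stieltjes_measure_Ioc[OF mono b(1)] a(1)[of k] by (simp add: ennreal_mult')
  qed
  then have "(\<integral>\<^sup>+x. ennreal (step_sum a b x) \<partial>stieltjes_measure \<psi>) \<le> (\<Sum>k. ennreal (a k * \<psi> (s k)))"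
    by (simp add: nn_integral_step_sum[OF a] suminf_le summableI)
  also have "\<dots> < \<infinity>"
  proof -
    have "0 \<le> a k * \<psi> (s k)" for k
      using mono_onD[OF mono(1), of 0 "s k"] mono(2) a(1)[of k] b[of k] by simp
    then have "(\<Sum>k. ennreal (a k * \<psi> (s k))) \<noteq> top"
      by (rule ennreal_suminf_neq_top[OF summable_mass])
    then show ?thesis by (simp add: less_top)
  qed
  finally have "(\<integral>\<^sup>+x. ennreal (step_sum a b x) * indicator {0<..} x \<partial>stieltjes_measure \<psi>) < \<infinity>"
    by (rule le_less_trans[rotated]) (intro nn_integral_mono, simp split: split_indicator)
  moreover have "lorentz_norm \<psi> (step_sum a b) \<le> ennreal (suminf a) * emeasure (stieltjes_measure \<psi>) {0}
      + (\<integral>\<^sup>+x. ennreal (step_sum a b x) * indicator {0<..} x \<partial>stieltjes_measure \<psi>)"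
    using lorentz_norm_le_nn_integral[of "step_sum a b" "suminf a" \<psi>]
    by (simp add: borel_measurable_step_sum antimono_on_step_sum step_sum_le_suminf a)
  ultimately show ?thesis
    using emeasure_stieltjes_measure_singleton_finite[OF mono, of 0]
    by (simp add: ennreal_mult_less_top order.strict_trans1)
qed

lemma lorentz_norm_powr_step_sum_ge:
  assumes "\<And>k. 0 \<le> a k" "summable a" "0 < p" "0 < b k"
  shows "ennreal (a k * (b k / 2) powr p) \<le> lorentz_norm (\<lambda>t. t powr p) (step_sum a b)"
proof -
  have "ennreal (a k * (b k / 2) powr p)
      = ennreal (a k) * emeasure (stieltjes_measure (\<lambda>t. t powr p)) {0<..b k / 2}"
    using assms emeasure_stieltjes_measure_Ioc[OF mono_on_powr[OF \<open>0 < p\<close>], of 0 "b k / 2"]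
    by (simp add: stieltjes_dist_powr ennreal_mult')
  also have "\<dots> \<le> ennreal \<bar>step_sum a b (b k)\<bar> * emeasure (stieltjes_measure (\<lambda>t. t powr p)) {0<..b k / 2}"
    using coeff_le_step_sum[OF assms(1,2), of b k] assms
    by (intro mult_right_mono ennreal_leI) auto
  also have "\<dots> \<le> lorentz_norm (\<lambda>t. t powr p) (step_sum a b)"
  proof (rule lorentz_norm_ge_Ioc)
    show "antimono_on {0<..} (\<lambda>x. \<bar>step_sum a b x\<bar>)"
      using antimono_on_step_sum[OF assms(1,2)] assms(1,2) by simp
  qed (use borel_measurable_step_sum[OF assms(1,2)] assms(4) in auto)
  finally show ?thesis .
qed

lemma lorentz_norm_powr_step_sum_infinite:
  assumes "\<And>k. 0 \<le> a k" "summable a" "0 < p" "\<And>k. 0 < b k"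
    and "0 < c" "\<And>k. c * 2 ^ k \<le> a k * (b k / 2) powr p"
  shows "lorentz_norm (\<lambda>t. t powr p) (step_sum a b) = \<infinity>"
proof (rule ccontr)
  assume "lorentz_norm (\<lambda>t. t powr p) (step_sum a b) \<noteq> \<infinity>"
  then obtain r where r: "lorentz_norm (\<lambda>t. t powr p) (step_sum a b) = ennreal r" "0 \<le> r"
    by (cases "lorentz_norm (\<lambda>t. t powr p) (step_sum a b)") auto
  obtain k where "r / c < 2 ^ k"
    using real_arch_pow[of 2 "r / c"] by auto
  then have k: "r < c * 2 ^ k"
    using \<open>0 < c\<close> by (simp add: divide_less_eq mult.commute)
  have "ennreal (c * 2 ^ k) \<le> ennreal (a k * (b k / 2) powr p)"
    using assms(6) by (rule ennreal_leI)
  also have "\<dots> \<le> ennreal r"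
    using lorentz_norm_powr_step_sum_ge[OF assms(1-3), of b k] assms(4)[of k] r(1) by simp
  finally show False
    using k r(2) by simp
qed

lemma sequence_of_small_ratios:
  fixes \<psi> :: "real \<Rightarrow> real"
  assumes "0 < p" and small: "\<And>c T. 0 < c \<Longrightarrow> \<exists>t\<ge>T. \<psi> t \<le> c * t powr p"
  obtains t :: "nat \<Rightarrow> real"
    where "\<And>k. 0 < t k" "\<And>k. 4 ^ k \<le> t k powr p" "\<And>k. \<psi> (t k) \<le> (1 / 4) ^ k * t k powr p"
proof -
  have "\<exists>t\<ge>max 1 (((4::real) ^ k) powr (1 / p)). \<psi> t \<le> (1 / 4) ^ k * t powr p" for k
    by (rule small) simp
  then obtain t where t_ge: "\<And>k. max 1 ((4 ^ k) powr (1 / p)) \<le> t k"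
    and t_small: "\<And>k. \<psi> (t k) \<le> (1 / 4) ^ k * t k powr p"
    by metis
  have "(4::real) ^ k \<le> t k powr p" for k
  proof -
    have "(4::real) ^ k = ((4 ^ k) powr (1 / p)) powr p"
      using \<open>0 < p\<close> by (simp add: powr_powr)
    also have "\<dots> \<le> t k powr p"
      using t_ge[of k] \<open>0 < p\<close> by (intro powr_mono2) auto
    finally show ?thesis .
  qed
  moreover have "0 < t k" for k
    using t_ge[of k] by simp
  ultimately show ?thesis
    using t_small that by blast
qed

lemma Lorentz_space_Linfty_not_subset:
  fixes \<psi> :: "real \<Rightarrow> real"
  assumes mono: "mono_on {0..} \<psi>" "0 \<le> \<psi> 0" and "0 < p"
    and small: "\<And>c T. 0 < c \<Longrightarrow> \<exists>t\<ge>T. \<psi> t \<le> c * t powr p"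
  shows "\<not> Lorentz_space \<psi> \<inter> Linfty_pos \<subseteq> Lorentz_space (\<lambda>t. t powr p)"
proof -
  obtain t where t_pos: "\<And>k. 0 < t k" and t_powr: "\<And>k. 4 ^ k \<le> t k powr p"
    and t_small: "\<And>k. \<psi> (t k) \<le> (1 / 4) ^ k * t k powr p"
    using sequence_of_small_ratios[OF \<open>0 < p\<close> small] by blast
  \<comment> \<open>The k-th step gets \<psi>-mass at most 2^-k but (t powr p)-mass at least 2^k / 4 powr p.\<close>
  define a where "a k = 2 ^ k / t k powr p" for k
  have a_nonneg: "0 \<le> a k" for k
    unfolding a_def by simp
  have a_le: "a k \<le> (1 / 2) ^ k" for k
  proof -
    have "a k \<le> 2 ^ k / 4 ^ k"
      unfolding a_def using t_powr[of k] t_pos[of k] by (intro divide_left_mono) auto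
    also have "(2::real) ^ k / 4 ^ k = (1 / 2) ^ k"
      by (simp add: power_divide[symmetric])
    finally show ?thesis .
  qed
  have a_psi: "a k * \<psi> (t k) \<le> (1 / 2) ^ k" for k
  proof -
    have "a k * \<psi> (t k) \<le> a k * ((1 / 4) ^ k * t k powr p)"
      using t_small a_nonneg by (rule mult_left_mono)
    also have "\<dots> = (1 / 2) ^ k"
      unfolding a_def using t_pos[of k] by (simp add: power_divide[symmetric] field_simps)
    finally show ?thesis .
  qed
  have "0 \<le> \<psi> (t k)" for k
    using mono_onD[OF mono(1), of 0 "t k"] mono(2) t_pos[of k] by simp
  then have summable_a_psi: "summable (\<lambda>k. a k * \<psi> (t k))"
    using a_nonneg a_psi by (intro summable_comparison_test'[OF summable_geometric, of "1 / 2"]) auto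
  have summable_a: "summable a"
    using a_nonneg a_le by (intro summable_comparison_test'[OF summable_geometric, of "1 / 2"]) auto
  define f where "f = step_sum a (\<lambda>k. t k / 2)"
  have "f \<in> Linfty_pos"
    unfolding f_def by (rule step_sum_Linfty_pos[OF a_nonneg summable_a])
  moreover have "lorentz_norm \<psi> f < \<infinity>"
    unfolding f_def using t_pos
    by (intro lorentz_norm_step_sum_finite[OF mono a_nonneg summable_a _ _ summable_a_psi])
       (auto intro: less_imp_le)
  ultimately have "f \<in> Lorentz_space \<psi> \<inter> Linfty_pos"
    by (simp add: Lorentz_space_def Linfty_pos_def)
  moreover have "lorentz_norm (\<lambda>t. t powr p) f = \<infinity>"
    unfolding f_def
  proof (rule lorentz_norm_powr_step_sum_infinite[OF a_nonneg summable_a \<open>0 < p\<close>])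
    show "1 / 4 powr p * 2 ^ k \<le> a k * (t k / 2 / 2) powr p" for k
      unfolding a_def using t_pos[of k] by (simp add: powr_divide)
  qed (use t_pos in auto)
  then have "f \<notin> Lorentz_space (\<lambda>t. t powr p)"
    by (simp add: Lorentz_space_def)
  ultimately show ?thesis
    by blast
qed

lemma Lorentz_space_Linfty_subset_iff:
  fixes \<psi> :: "real \<Rightarrow> real"
  assumes mono: "mono_on {0..} \<psi>" "0 \<le> \<psi> 0" and "0 < p"
  shows "Lorentz_space \<psi> \<inter> Linfty_pos \<subseteq> Lorentz_space (\<lambda>t. t powr p)
    \<longleftrightarrow> (\<exists>c>0. \<forall>\<^sub>F t in at_top. c < \<psi> t / t powr p)"
proof
  assume subset: "Lorentz_space \<psi> \<inter> Linfty_pos \<subseteq> Lorentz_space (\<lambda>t. t powr p)"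
  show "\<exists>c>0. \<forall>\<^sub>F t in at_top. c < \<psi> t / t powr p"
  proof (rule ccontr)
    assume not_bounded_below: "\<not> (\<exists>c>0. \<forall>\<^sub>F t in at_top. c < \<psi> t / t powr p)"
    have "\<exists>t\<ge>T. \<psi> t \<le> c * t powr p" if "0 < c" for c T
    proof -
      from not_bounded_below that have "\<not> (\<forall>\<^sub>F t in at_top. c < \<psi> t / t powr p)"
        by blast
      then have "\<exists>t\<ge>max T 1. \<psi> t / t powr p \<le> c"
        unfolding eventually_at_top_linorder by (meson not_less)
      then show ?thesis by (auto simp: divide_le_eq)
    qed
    with subset show False
      using Lorentz_space_Linfty_not_subset[OF mono \<open>0 < p\<close>] by blast
  qed
next
  assume "\<exists>c>0. \<forall>\<^sub>F t in at_top. c < \<psi> t / t powr p"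
  then obtain c T where "0 < c" and T: "\<And>t. T \<le> t \<Longrightarrow> c < \<psi> t / t powr p"
    by (auto simp: eventually_at_top_linorder)
  have growth: "c * t powr p \<le> \<psi> t" if "max T 1 \<le> t" for t
    using T[of t] that by (simp add: field_simps)
  show "Lorentz_space \<psi> \<inter> Linfty_pos \<subseteq> Lorentz_space (\<lambda>t. t powr p)"
  proof
    fix f assume "f \<in> Lorentz_space \<psi> \<inter> Linfty_pos"
    then obtain C where "f \<in> measurable_pos" "lorentz_norm \<psi> f < \<infinity>"
      and "AE x in lborel. 0 < x \<longrightarrow> \<bar>f x\<bar> \<le> C"
      unfolding Lorentz_space_def Linfty_pos_def by auto
    with lorentz_norm_powr_finite[OF mono \<open>0 < p\<close> \<open>0 < c\<close> growth]
    show "f \<in> Lorentz_space (\<lambda>t. t powr p)"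
      unfolding Lorentz_space_def by blast
  qed
qed

section \<open>Dyadic discretisation\<close>

lemma Liminf_ereal_eq_0_iff:
  fixes X :: "'a \<Rightarrow> real"
  assumes "F \<noteq> bot" "\<forall>\<^sub>F x in F. 0 \<le> X x"
  shows "Liminf F (\<lambda>x. ereal (X x)) = 0 \<longleftrightarrow> \<not> (\<exists>c>0. \<forall>\<^sub>F x in F. c < X x)"
proof -
  have "0 \<le> Liminf F (\<lambda>x. ereal (X x))"
    using assms(2) by (intro Liminf_bounded) (auto elim: eventually_mono)
  moreover have "0 < Liminf F (\<lambda>x. ereal (X x)) \<longleftrightarrow> (\<exists>c>0. \<forall>\<^sub>F x in F. c < X x)"
  proof
    assume "0 < Liminf F (\<lambda>x. ereal (X x))"
    then obtain c :: real where "0 < c" "ereal c < Liminf F (\<lambda>x. ereal (X x))"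
      by (metis ereal_dense2 ereal_less(2) less_ereal.simps(1) order.strict_trans)
    then show "\<exists>c>0. \<forall>\<^sub>F x in F. c < X x"
      by (auto dest!: less_LiminfD)
  next
    assume "\<exists>c>0. \<forall>\<^sub>F x in F. c < X x"
    then obtain c where "0 < c" "\<forall>\<^sub>F x in F. c < X x" by blast
    then have "ereal c \<le> Liminf F (\<lambda>x. ereal (X x))"
      by (intro Liminf_bounded) (auto elim: eventually_mono)
    then show "0 < Liminf F (\<lambda>x. ereal (X x))"
      using \<open>0 < c\<close> by (meson ereal_less(2) less_le_trans)
  qed
  ultimately show ?thesis by auto
qed

lemma ex_power2_bracket:
  fixes x :: real
  assumes "1 \<le> x"
  obtains m where "2 ^ m \<le> x" "x < 2 ^ Suc m"
proof -
  have "1 \<le> nat \<lfloor>x\<rfloor>" using assms by (metis nat_mono nat_one_as_int one_le_floor)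
  then obtain m where m: "2 ^ m \<le> nat \<lfloor>x\<rfloor>" "nat \<lfloor>x\<rfloor> < 2 ^ (m + 1)"
    using ex_power_ivl1[of 2 "nat \<lfloor>x\<rfloor>"] by auto
  have "real (2 ^ m) \<le> real (nat \<lfloor>x\<rfloor>)"
    using m(1) by (rule of_nat_mono)
  then have "2 ^ m \<le> x"
    using assms by (simp add: le_floor_iff)
  moreover have "real (nat \<lfloor>x\<rfloor> + 1) \<le> real (2 ^ Suc m)"
    using m(2) by (intro of_nat_mono) simp
  then have "of_int \<lfloor>x\<rfloor> + 1 \<le> (2::real) ^ Suc m"
    using assms by simp
  then have "x < 2 ^ Suc m"
    using real_of_int_floor_add_one_gt[of x] by linarith
  ultimately show ?thesis by (rule that)
qed

lemma pow_mult_powr_inverse: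
  fixes x :: real
  assumes "0 < x" "1 \<le> n"
  shows "(x ^ (m * n)) powr (1 / real n) = x ^ m"
  using assms by (simp add: power_mult powr_realpow[symmetric] powr_powr)

lemma dyadic_lower_bound_of_lower_bound:
  fixes \<psi> :: "real \<Rightarrow> real" and n :: nat
  assumes "1 \<le> n"
    and "\<exists>c>0. \<forall>\<^sub>F t in at_top. c < \<psi> t / t powr (1 / real n)"
  shows "\<exists>c>0. \<forall>\<^sub>F m in sequentially. c < \<psi> (2 ^ (m * n)) / 2 ^ m"
proof -
  from assms(2) obtain c T where "0 < c" and T: "\<And>t. T \<le> t \<Longrightarrow> c < \<psi> t / t powr (1 / real n)"
    by (auto simp: eventually_at_top_linorder)
  have "\<forall>\<^sub>F m in sequentially. c < \<psi> (2 ^ (m * n)) / 2 ^ m"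
  proof (rule eventually_sequentiallyI)
    fix m assume "nat \<lceil>T\<rceil> \<le> m"
    then have "T \<le> real m" by linarith
    also have "\<dots> \<le> 2 ^ m" by (simp add: less_imp_le)
    also have "(2::real) ^ m \<le> 2 ^ (m * n)" using \<open>1 \<le> n\<close> by (intro power_increasing) auto
    finally show "c < \<psi> (2 ^ (m * n)) / 2 ^ m"
      using T[of "2 ^ (m * n)"] pow_mult_powr_inverse[of 2 n m] \<open>1 \<le> n\<close> by simp
  qed
  then show ?thesis
    using \<open>0 < c\<close> by blast
qed

lemma lower_bound_of_dyadic_lower_bound:
  fixes \<psi> :: "real \<Rightarrow> real" and n :: nat
  assumes "1 \<le> n" and mono: "mono_on {0..} \<psi>" "0 \<le> \<psi> 0"
    and "\<exists>c>0. \<forall>\<^sub>F m in sequentially. c < \<psi> (2 ^ (m * n)) / 2 ^ m"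
  shows "\<exists>c>0. \<forall>\<^sub>F t in at_top. c < \<psi> t / t powr (1 / real n)"
proof -
  from assms(4) obtain c M where "0 < c" and M: "\<And>m. M \<le> m \<Longrightarrow> c < \<psi> (2 ^ (m * n)) / 2 ^ m"
    by (auto simp: eventually_sequentially)
  have "c / 2 < \<psi> t / t powr (1 / real n)" if t: "2 ^ (M * n) \<le> t" for t
  proof -
    have "0 < t" using less_le_trans[OF _ t, of 0] by simp
    have "2 ^ M \<le> t powr (1 / real n)"
      using powr_mono2[OF _ _ t, of "1 / real n"] pow_mult_powr_inverse[of 2 n M] \<open>1 \<le> n\<close> by simp
    moreover have "(1::real) \<le> 2 ^ M" by simp
    ultimately obtain m where m: "2 ^ m \<le> t powr (1 / real n)" "t powr (1 / real n) < 2 ^ Suc m"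
      using ex_power2_bracket by (metis order.trans)
    have "(2::real) ^ M < 2 ^ Suc m"
      using \<open>2 ^ M \<le> t powr (1 / real n)\<close> m(2) by linarith
    then have "M \<le> m" by (subst (asm) power_strict_increasing_iff) auto
    have "2 ^ (m * n) \<le> t"
    proof -
      have "(2::real) ^ (m * n) = (2 ^ m) ^ n" by (simp add: power_mult)
      also have "\<dots> \<le> (t powr (1 / real n)) ^ n" using m(1) by (intro power_mono) auto
      also have "\<dots> = t" using \<open>0 < t\<close> \<open>1 \<le> n\<close> by (simp add: powr_realpow[symmetric] powr_powr)
      finally show ?thesis .
    qed
    have "0 \<le> \<psi> (2 ^ (m * n))"
      using mono_onD[OF mono(1), of 0 "2 ^ (m * n)"] mono(2) by simp
    have "c / 2 < \<psi> (2 ^ (m * n)) / 2 ^ Suc m"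
      using M[OF \<open>M \<le> m\<close>] by simp
    also have "\<dots> \<le> \<psi> (2 ^ (m * n)) / t powr (1 / real n)"
      using m(2) \<open>0 < t\<close> \<open>0 \<le> \<psi> (2 ^ (m * n))\<close> by (intro divide_left_mono) auto
    also have "\<dots> \<le> \<psi> t / t powr (1 / real n)"
      using \<open>2 ^ (m * n) \<le> t\<close> \<open>0 < t\<close> by (intro divide_right_mono mono_onD[OF mono(1)]) auto
    finally show ?thesis .
  qed
  then show ?thesis
    using \<open>0 < c\<close> by (intro exI[of _ "c / 2"]) (auto simp: eventually_at_top_linorder)
qed

lemma lower_bound_iff_dyadic_lower_bound:
  fixes \<psi> :: "real \<Rightarrow> real" and n :: nat
  assumes "1 \<le> n" and "mono_on {0..} \<psi>" "0 \<le> \<psi> 0"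
  shows "(\<exists>c>0. \<forall>\<^sub>F t in at_top. c < \<psi> t / t powr (1 / real n))
     \<longleftrightarrow> (\<exists>c>0. \<forall>\<^sub>F m in sequentially. c < \<psi> (2 ^ (m * n)) / 2 ^ m)"
  using dyadic_lower_bound_of_lower_bound[OF assms(1)] lower_bound_of_dyadic_lower_bound[OF assms]
  by (rule iffI)

theorem lemma4p4:
  fixes \<psi> :: "real \<Rightarrow> real" and n :: nat
  assumes "n \<ge> 1"
    and "mono_on {0..} \<psi>" and "concave_on {0..} \<psi>" and "\<psi> 0 = 0"
  shows "(\<not> (Lorentz_space \<psi> \<inter> Linfty_pos \<subseteq> Lorentz_n1 n)
            \<longleftrightarrow> Liminf at_top (\<lambda>t. ereal (\<psi> t / t powr (1 / real n))) = 0)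
       \<and> (Liminf at_top (\<lambda>t. ereal (\<psi> t / t powr (1 / real n))) = 0
            \<longleftrightarrow> liminf (\<lambda>m. ereal (\<psi> (2 ^ (m * n)) / 2 ^ m)) = 0)"
proof -
  have \<psi>_nonneg: "0 \<le> \<psi> t" if "0 \<le> t" for t
    using mono_onD[OF assms(2), of 0 t] assms(4) that by simp
  have Liminf_continuous:
    "Liminf at_top (\<lambda>t. ereal (\<psi> t / t powr (1 / real n))) = 0
      \<longleftrightarrow> \<not> (\<exists>c>0. \<forall>\<^sub>F t in at_top. c < \<psi> t / t powr (1 / real n))"
    by (rule Liminf_ereal_eq_0_iff)
       (auto simp: eventually_at_top_linorder intro!: exI[of _ 0] divide_nonneg_nonneg \<psi>_nonneg)
  have Liminf_dyadic:
    "liminf (\<lambda>m. ereal (\<psi> (2 ^ (m * n)) / 2 ^ m)) = 0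
      \<longleftrightarrow> \<not> (\<exists>c>0. \<forall>\<^sub>F m in sequentially. c < \<psi> (2 ^ (m * n)) / 2 ^ m)"
    by (rule Liminf_ereal_eq_0_iff) (auto intro!: always_eventually divide_nonneg_nonneg \<psi>_nonneg)
  have "0 < 1 / real n"
    using assms(1) by simp
  show ?thesis
    unfolding Liminf_continuous Liminf_dyadic Lorentz_n1_def
    using Lorentz_space_Linfty_subset_iff[OF assms(2) _ \<open>0 < 1 / real n\<close>]
      lower_bound_iff_dyadic_lower_bound[OF assms(1,2)] assms(4)
    by simp
qed

end
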